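(* Let $t\ge 1$, $\alpha>0$, and $\mathbf{h}=[h_1\cdots h_t]^T\sim\mathrm{CN}(\mathbf{I}_t)$. Consider the interleaved antenna selection Scheme $\mathtt{B}$: starting with $i=1$, the transmitter trains antenna $i$ (so the receiver learns $h_i$); the receiver feeds back the single bit $\mathtt{1}$ if $|h_i|^2\ge\alpha$ and $\mathtt{0}$ otherwise; if the bit is $\mathtt{0}$ and $i<t$, set $i\leftarrow i+1$ and repeat; otherwise the process stops and the transmitter transmits using beamforming vector $\mathbf{e}_i$. Consider also the conventional antenna selection Scheme $\mathtt{A}$, which trains all $t$ antennas, feeds back $\lceil\log_2 t\rceil$ bits, and transmits with $\mathbf{e}_\tau$ where $\tau=\arg\max_i|h_i|$. Then $\mathtt{out}(\mathtt{B})=\mathtt{out}(\mathtt{A})=(1-e^{-\alpha})^t$, and $$\mathtt{tl}(\mathtt{B})=\mathtt{fr}(\mathtt{B})=e^{\alpha}\bigl(1-(1-e^{-\alpha})^t\bigr)<e^{\alpha}.$$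
   Context: $\mathbf{e}_i$ is the $i$-th standard basis vector of $\mathbb{C}^t$. For a scheme that transmits with beamforming vector $\mathbf{x}(\mathbf{h})$ (with $\|\mathbf{x}\|\le1$), the outage probability is $\mathtt{out}=\mathrm{P}(|\langle\mathbf{x}(\mathbf{h}),\mathbf{h}\rangle|^2<\alpha)$, where $\langle\mathbf{x},\mathbf{h}\rangle=\sum_i \overline{x_i}h_i$. The training length $\mathtt{tl}$ of a scheme is the expected number of antennas trained per channel state, and its feedback rate $\mathtt{fr}$ is the expected number of feedback bits sent per channel state. $\mathrm{CN}(\mathbf{I}_t)$: i.i.d. standard circularly-symmetric complex Gaussian entries. *)

theory Defs
  imports "HOL-Probability.Probability"
begin

text \<open>Vectors in C^t are modelled as functions nat => complex, only indices i < t
  being relevant (antenna i of the paper is index i-1 here).\<close>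

definition cinner :: "nat \<Rightarrow> (nat \<Rightarrow> complex) \<Rightarrow> (nat \<Rightarrow> complex) \<Rightarrow> complex" where
  "cinner t x h = (\<Sum>i<t. cnj (x i) * h i)"

definition basis_vec :: "nat \<Rightarrow> nat \<Rightarrow> complex" where
  "basis_vec i = (\<lambda>j. if j = i then 1 else 0)"

definition std_complex_gaussian_vec ::
  "'a measure \<Rightarrow> nat \<Rightarrow> ('a \<Rightarrow> nat \<Rightarrow> complex) \<Rightarrow> bool" where
  "std_complex_gaussian_vec M t h \<longleftrightarrow>
     prob_space.indep_vars M (\<lambda>_. borel)
       (\<lambda>(i, b) \<omega>. if b then Re (h \<omega> i) else Im (h \<omega> i)) ({..<t} \<times> UNIV) \<and>
     (\<forall>i<t. distributed M lborel (\<lambda>\<omega>. Re (h \<omega> i)) (\<lambda>x. ennreal (normal_density 0 (sqrt (1/2)) x)) \<and>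
            distributed M lborel (\<lambda>\<omega>. Im (h \<omega> i)) (\<lambda>x. ennreal (normal_density 0 (sqrt (1/2)) x)))"

definition outage :: "'a measure \<Rightarrow> nat \<Rightarrow> real \<Rightarrow> ('a \<Rightarrow> nat \<Rightarrow> complex)
    \<Rightarrow> ((nat \<Rightarrow> complex) \<Rightarrow> (nat \<Rightarrow> complex)) \<Rightarrow> real" where
  "outage M t \<alpha> h x = measure M {\<omega> \<in> space M. (cmod (cinner t (x (h \<omega>)) (h \<omega>)))\<^sup>2 < \<alpha>}"

text \<open>Run of Scheme B starting at antenna i with n further antennas after i.
  Returns (selected antenna, list of trained antennas, list of feedback bits).\<close>
fun runB :: "real \<Rightarrow> (nat \<Rightarrow> complex) \<Rightarrow> nat \<Rightarrow> nat \<Rightarrow> nat \<times> nat list \<times> bool list" where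
  "runB \<alpha> h i 0 = (i, [i], [\<alpha> \<le> (cmod (h i))\<^sup>2])"
| "runB \<alpha> h i (Suc n) =
     (if \<alpha> \<le> (cmod (h i))\<^sup>2 then (i, [i], [True])
      else (case runB \<alpha> h (Suc i) n of (j, tr, bs) \<Rightarrow> (j, i # tr, False # bs)))"

definition schemeB :: "nat \<Rightarrow> real \<Rightarrow> (nat \<Rightarrow> complex) \<Rightarrow> nat \<times> nat list \<times> bool list" where
  "schemeB t \<alpha> h = runB \<alpha> h 0 (t - 1)"

definition schemeB_bf :: "nat \<Rightarrow> real \<Rightarrow> (nat \<Rightarrow> complex) \<Rightarrow> nat \<Rightarrow> complex" where
  "schemeB_bf t \<alpha> h = basis_vec (fst (schemeB t \<alpha> h))"

definition tlB :: "'a measure \<Rightarrow> nat \<Rightarrow> real \<Rightarrow> ('a \<Rightarrow> nat \<Rightarrow> complex) \<Rightarrow> real" where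
  "tlB M t \<alpha> h = (\<integral>\<omega>. real (length (fst (snd (schemeB t \<alpha> (h \<omega>))))) \<partial>M)"

definition frB :: "'a measure \<Rightarrow> nat \<Rightarrow> real \<Rightarrow> ('a \<Rightarrow> nat \<Rightarrow> complex) \<Rightarrow> real" where
  "frB M t \<alpha> h = (\<integral>\<omega>. real (length (snd (snd (schemeB t \<alpha> (h \<omega>))))) \<partial>M)"

definition schemeA_bf :: "nat \<Rightarrow> (nat \<Rightarrow> complex) \<Rightarrow> nat \<Rightarrow> complex" where
  "schemeA_bf t h = basis_vec (ARG_MAX (\<lambda>i. cmod (h i)) i. i < t)"

end

theory Submission
  imports Defs
begin

(* Re h_j and Im h_j are independent N(0, 1/2), so P(|h_j|^2 < alpha) is (1/pi) times the Gaussian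
   integral of exp (-x^2 - y^2) over the disc x^2 + y^2 < alpha.  On a quadrant the substitution
   y = x s turns this into the integral of (1 - exp (-alpha)) / (2 (1 + s^2)) over s > 0, which is
   an arctan; hence P(|h_j|^2 < alpha) = 1 - exp (-alpha) =: p.  The coordinates h_j are
   independent, so the first k antennas all satisfy |h_j|^2 < alpha with probability p^k.  Both
   schemes are in outage exactly when all t antennas do, and Scheme B trains antenna k + 1, and
   feeds back one bit for it, exactly when the first k antennas do; so
   tl = fr = sum_{k<t} p^k = (1 - p^t) / (1 - p) = exp alpha (1 - p^t). *)

lemma nn_integral_x_exp_neg_sq_below:
  fixes k \<alpha> :: real
  assumes "k > 0" and "\<alpha> > 0"
  shows "(\<integral>\<^sup>+x. ennreal (x * exp (- x\<^sup>2 * k)) * indicator {0<..} x * indicator {..<\<alpha>} (x\<^sup>2 * k) \<partial>lborel)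
     = ennreal ((1 - exp (-\<alpha>)) / (2 * k))"
proof -
  define c where "c = sqrt (\<alpha> / k)"
  have "c > 0" and c: "c\<^sup>2 * k = \<alpha>"
    using assms by (auto simp: c_def)
  have below_iff: "x\<^sup>2 * k < \<alpha> \<longleftrightarrow> x < c" if "x \<ge> 0" for x
    using that \<open>c > 0\<close> \<open>k > 0\<close> unfolding c[symmetric]
    by (smt (verit) mult_le_cancel_right power_mono_iff pos2)
  have "(\<integral>\<^sup>+x. ennreal (x * exp (- x\<^sup>2 * k)) * indicator {0<..} x * indicator {..<\<alpha>} (x\<^sup>2 * k) \<partial>lborel)
      = (\<integral>\<^sup>+x. ennreal (x * exp (- x\<^sup>2 * k)) * indicator {0..c} x \<partial>lborel)"
    by (intro nn_integral_cong_AE AE_I[where N = "{0, c}"])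
       (auto simp: below_iff emeasure_lborel_countable split: split_indicator)
  also have "\<dots> = ennreal (- exp (- c\<^sup>2 * k) / (2 * k) - (- exp (- 0\<^sup>2 * k) / (2 * k)))"
    using assms \<open>c > 0\<close>
    by (intro nn_integral_FTC_Icc) (auto intro!: derivative_eq_intros simp: field_simps)
  also have "\<dots> = ennreal ((1 - exp (-\<alpha>)) / (2 * k))"
    using c by (simp add: diff_divide_distrib)
  finally show ?thesis .
qed

lemma nn_integral_lborel_even:
  fixes f :: "real \<Rightarrow> ennreal"
  assumes [measurable]: "f \<in> borel_measurable borel" and even: "\<And>y. f (- y) = f y"
  shows "(\<integral>\<^sup>+y. f y \<partial>lborel) = 2 * (\<integral>\<^sup>+y. f y * indicator {0<..} y \<partial>lborel)"
proof -
  have "(\<integral>\<^sup>+y. f y \<partial>lborel) = (\<integral>\<^sup>+y. f y * indicator {0<..} y + f y * indicator {..<0} y \<partial>lborel)"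
    by (intro nn_integral_cong_AE AE_I[where N = "{0}"]) (auto split: split_indicator)
  also have "\<dots> = (\<integral>\<^sup>+y. f y * indicator {0<..} y \<partial>lborel) + (\<integral>\<^sup>+y. f y * indicator {..<0} y \<partial>lborel)"
    by (rule nn_integral_add) auto
  also have "(\<integral>\<^sup>+y. f y * indicator {..<0} y \<partial>lborel) = (\<integral>\<^sup>+y. f y * indicator {0<..} y \<partial>lborel)"
    by (subst nn_integral_real_affine[where t = 0 and c = "-1"])
       (auto simp: even intro!: nn_integral_cong split: split_indicator)
  finally show ?thesis by (simp add: mult_2)
qed

lemma nn_integral_gaussian_quarter_disc:
  fixes \<alpha> :: real
  assumes "\<alpha> > 0"
  shows "(\<integral>\<^sup>+x. \<integral>\<^sup>+y. ennreal (exp (- x\<^sup>2) * exp (- y\<^sup>2)) * indicator {0<..} x * indicator {0<..} y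
            * indicator {..<\<alpha>} (x\<^sup>2 + y\<^sup>2) \<partial>lborel \<partial>lborel) = ennreal (pi / 4 * (1 - exp (-\<alpha>)))"
proof -
  let ?I = "indicator {0<..} :: real \<Rightarrow> ennreal"
  let ?f = "\<lambda>x s. ennreal (x * exp (- x\<^sup>2 * (1 + s\<^sup>2))) * ?I x * indicator {..<\<alpha>} (x\<^sup>2 * (1 + s\<^sup>2)) * ?I s"
  have "(\<integral>\<^sup>+x. \<integral>\<^sup>+y. ennreal (exp (- x\<^sup>2) * exp (- y\<^sup>2)) * ?I x * ?I y * indicator {..<\<alpha>} (x\<^sup>2 + y\<^sup>2) \<partial>lborel \<partial>lborel)
      = (\<integral>\<^sup>+x. \<integral>\<^sup>+s. ?f x s \<partial>lborel \<partial>lborel)"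
  proof (rule nn_integral_cong, cases)
    fix x :: real assume "x > 0"
    then show "(\<integral>\<^sup>+y. ennreal (exp (- x\<^sup>2) * exp (- y\<^sup>2)) * ?I x * ?I y * indicator {..<\<alpha>} (x\<^sup>2 + y\<^sup>2) \<partial>lborel)
        = (\<integral>\<^sup>+s. ?f x s \<partial>lborel)"
      by (subst nn_integral_real_affine[where t = 0 and c = x])
         (auto simp: mult_exp_exp nn_integral_cmult[symmetric] field_simps zero_less_mult_iff
            ennreal_mult[symmetric] intro!: nn_integral_cong split: split_indicator)
  qed simp
  also have "\<dots> = (\<integral>\<^sup>+s. \<integral>\<^sup>+x. ?f x s \<partial>lborel \<partial>lborel)"
    by (rule lborel_pair.Fubini'[symmetric]) auto
  also have "\<dots> = (\<integral>\<^sup>+s. ennreal ((1 - exp (-\<alpha>)) / (2 * (1 + s\<^sup>2))) * ?I s \<partial>lborel)"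
  proof (rule nn_integral_cong)
    fix s :: real
    show "(\<integral>\<^sup>+x. ?f x s \<partial>lborel) = ennreal ((1 - exp (-\<alpha>)) / (2 * (1 + s\<^sup>2))) * ?I s"
      using nn_integral_x_exp_neg_sq_below[of "1 + s\<^sup>2" \<alpha>] assms
      by (cases "s > 0") (simp_all add: add_pos_nonneg)
  qed
  also have "\<dots> = (\<integral>\<^sup>+s. ennreal ((1 - exp (-\<alpha>)) / (2 * (1 + s\<^sup>2))) * indicator {0..} s \<partial>lborel)"
    by (intro nn_integral_cong_AE AE_I[where N = "{0}"]) (auto split: split_indicator)
  also have "\<dots> = ennreal ((1 - exp (-\<alpha>)) / 2 * (pi / 2) - (1 - exp (-\<alpha>)) / 2 * arctan 0)"
    using assms
    by (intro nn_integral_FTC_atLeast tendsto_intros tendsto_arctan_at_top)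
       (auto intro!: derivative_eq_intros simp: field_simps add_nonneg_eq_0_iff power2_eq_square)
  finally show ?thesis
    by (simp add: mult.commute)
qed

lemma nn_integral_gaussian_disc:
  fixes \<alpha> :: real
  assumes "\<alpha> > 0"
  shows "(\<integral>\<^sup>+x. \<integral>\<^sup>+y. ennreal (exp (- x\<^sup>2) * exp (- y\<^sup>2)) * indicator {..<\<alpha>} (x\<^sup>2 + y\<^sup>2) \<partial>lborel \<partial>lborel)
    = ennreal (pi * (1 - exp (-\<alpha>)))"
proof -
  let ?I = "indicator {0<..} :: real \<Rightarrow> ennreal"
  let ?g = "\<lambda>x y. ennreal (exp (- x\<^sup>2) * exp (- y\<^sup>2)) * indicator {..<\<alpha>} (x\<^sup>2 + y\<^sup>2)"
  have "(\<integral>\<^sup>+x. \<integral>\<^sup>+y. ?g x y \<partial>lborel \<partial>lborel) = (\<integral>\<^sup>+x. 2 * (\<integral>\<^sup>+y. ?g x y * ?I y \<partial>lborel) \<partial>lborel)"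
    by (intro nn_integral_cong nn_integral_lborel_even) auto
  also have "\<dots> = 2 * (\<integral>\<^sup>+x. \<integral>\<^sup>+y. ?g x y * ?I y \<partial>lborel \<partial>lborel)"
    by (rule nn_integral_cmult) measurable
  also have "(\<integral>\<^sup>+x. \<integral>\<^sup>+y. ?g x y * ?I y \<partial>lborel \<partial>lborel)
      = 2 * (\<integral>\<^sup>+x. (\<integral>\<^sup>+y. ?g x y * ?I y \<partial>lborel) * ?I x \<partial>lborel)"
    by (rule nn_integral_lborel_even) auto
  also have "(\<integral>\<^sup>+x. (\<integral>\<^sup>+y. ?g x y * ?I y \<partial>lborel) * ?I x \<partial>lborel)
      = (\<integral>\<^sup>+x. \<integral>\<^sup>+y. ennreal (exp (- x\<^sup>2) * exp (- y\<^sup>2)) * ?I x * ?I y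
            * indicator {..<\<alpha>} (x\<^sup>2 + y\<^sup>2) \<partial>lborel \<partial>lborel)"
    by (intro nn_integral_cong) (simp add: nn_integral_cmult ac_simps)
  also have "\<dots> = ennreal (pi / 4 * (1 - exp (-\<alpha>)))"
    using assms by (rule nn_integral_gaussian_quarter_disc)
  finally show ?thesis
    using ennreal_mult'[of 4 "pi / 4 * (1 - exp (-\<alpha>))"] by (simp add: mult.assoc[symmetric])
qed

context prob_space
begin

lemma prob_cmod_sq_less_circular_gaussian:
  fixes Z :: "'a \<Rightarrow> complex" and \<alpha> :: real
  assumes Re: "distributed M lborel (\<lambda>\<omega>. Re (Z \<omega>)) (\<lambda>x. ennreal (normal_density 0 (sqrt (1/2)) x))"
    and Im: "distributed M lborel (\<lambda>\<omega>. Im (Z \<omega>)) (\<lambda>x. ennreal (normal_density 0 (sqrt (1/2)) x))"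
    and indep: "indep_var lborel (\<lambda>\<omega>. Re (Z \<omega>)) lborel (\<lambda>\<omega>. Im (Z \<omega>))"
    and "\<alpha> > 0"
  shows "prob {\<omega>\<in>space M. (cmod (Z \<omega>))\<^sup>2 < \<alpha>} = 1 - exp (-\<alpha>)"
proof -
  let ?\<phi> = "\<lambda>x. ennreal (normal_density 0 (sqrt (1/2)) x)"
  define D where "D = {z :: real \<times> real. (fst z)\<^sup>2 + (snd z)\<^sup>2 < \<alpha>}"
  have D: "D \<in> sets (lborel \<Otimes>\<^sub>M lborel)"
  proof -
    have "open D"
      unfolding D_def by (intro open_Collect_less continuous_intros)
    then have "D \<in> sets (borel \<Otimes>\<^sub>M borel)"
      unfolding borel_prod by simp
    then show ?thesis
      by simp
  qed
  have joint: "distributed M (lborel \<Otimes>\<^sub>M lborel) (\<lambda>\<omega>. (Re (Z \<omega>), Im (Z \<omega>))) (\<lambda>(x, y). ?\<phi> x * ?\<phi> y)"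
    by (rule distributed_joint_indep[OF _ _ Re Im indep]) (auto intro: lborel.sigma_finite_measure_axioms)
  have "{\<omega>\<in>space M. (cmod (Z \<omega>))\<^sup>2 < \<alpha>} = (\<lambda>\<omega>. (Re (Z \<omega>), Im (Z \<omega>))) -` D \<inter> space M"
    by (auto simp: D_def cmod_power2)
  then have "emeasure M {\<omega>\<in>space M. (cmod (Z \<omega>))\<^sup>2 < \<alpha>}
      = (\<integral>\<^sup>+z. (\<lambda>(x, y). ?\<phi> x * ?\<phi> y) z * indicator D z \<partial>(lborel \<Otimes>\<^sub>M lborel))"
    using distributed_emeasure[OF joint D] by simp
  also have "\<dots> = (\<integral>\<^sup>+x. \<integral>\<^sup>+y. ennreal (1 / pi) * (ennreal (exp (- x\<^sup>2) * exp (- y\<^sup>2))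
      * indicator {..<\<alpha>} (x\<^sup>2 + y\<^sup>2)) \<partial>lborel \<partial>lborel)"
    using D by (subst lborel.nn_integral_fst[symmetric])
       (auto simp: D_def normal_density_def ennreal_mult[symmetric] intro!: nn_integral_cong split: split_indicator)
  also have "\<dots> = ennreal (1 / pi) * ennreal (pi * (1 - exp (-\<alpha>)))"
    by (simp add: nn_integral_cmult nn_integral_gaussian_disc[OF \<open>\<alpha> > 0\<close>])
  also have "\<dots> = ennreal (1 - exp (-\<alpha>))"
    using \<open>\<alpha> > 0\<close> by (simp flip: ennreal_mult)
  finally show ?thesis
    using \<open>\<alpha> > 0\<close> by (simp add: emeasure_eq_measure)
qed

lemma std_complex_gaussian_vec_indep_Re_Im:
  assumes "std_complex_gaussian_vec M t h" and "j < t"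
  shows "indep_var lborel (\<lambda>\<omega>. Re (h \<omega> j)) lborel (\<lambda>\<omega>. Im (h \<omega> j))"
proof -
  let ?Z = "\<lambda>(i, b) \<omega>. if b then Re (h \<omega> i) else Im (h \<omega> i)"
  have "indep_vars (\<lambda>_. borel) ?Z ({..<t} \<times> UNIV)"
    using assms(1) unfolding std_complex_gaussian_vec_def by blast
  then have "indep_var (PiM {(j, True)} (\<lambda>_. borel)) (\<lambda>\<omega>. restrict (\<lambda>i. ?Z i \<omega>) {(j, True)})
      (PiM {(j, False)} (\<lambda>_. borel)) (\<lambda>\<omega>. restrict (\<lambda>i. ?Z i \<omega>) {(j, False)})"
    by (rule indep_var_restrict) (use assms(2) in auto)
  then have "indep_var lborel ((\<lambda>f. f (j, True)) \<circ> (\<lambda>\<omega>. restrict (\<lambda>i. ?Z i \<omega>) {(j, True)}))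
      lborel ((\<lambda>f. f (j, False)) \<circ> (\<lambda>\<omega>. restrict (\<lambda>i. ?Z i \<omega>) {(j, False)}))"
    by (rule indep_var_compose) simp_all
  then show ?thesis
    by (simp add: comp_def)
qed

lemma std_complex_gaussian_vec_prob_cmod_sq_less:
  assumes "std_complex_gaussian_vec M t h" and "j < t" and "\<alpha> > 0"
  shows "prob {\<omega>\<in>space M. (cmod (h \<omega> j))\<^sup>2 < \<alpha>} = 1 - exp (-\<alpha>)"
  using assms std_complex_gaussian_vec_indep_Re_Im[OF assms(1,2)]
  by (intro prob_cmod_sq_less_circular_gaussian) (auto simp: std_complex_gaussian_vec_def)

lemma std_complex_gaussian_vec_indep_components:
  assumes "std_complex_gaussian_vec M t h"
  shows "indep_vars (\<lambda>_. borel) (\<lambda>j \<omega>. h \<omega> j) {..<t}"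
proof -
  let ?Z = "\<lambda>(i, b) \<omega>. if b then Re (h \<omega> i) else Im (h \<omega> i)"
  let ?K = "\<lambda>j::nat. {j} \<times> (UNIV :: bool set)"
  have "indep_vars (\<lambda>_. borel) ?Z ({..<t} \<times> UNIV)"
    using assms unfolding std_complex_gaussian_vec_def by blast
  then have "indep_vars (\<lambda>j. PiM (?K j) (\<lambda>_. borel)) (\<lambda>j \<omega>. restrict (\<lambda>i. ?Z i \<omega>) (?K j)) {..<t}"
    by (rule indep_vars_restrict) (auto simp: disjoint_family_on_def)
  then have "indep_vars (\<lambda>_. borel)
      (\<lambda>j \<omega>. (\<lambda>f. Complex (f (j, True)) (f (j, False))) (restrict (\<lambda>i. ?Z i \<omega>) (?K j))) {..<t}"
    by (rule indep_vars_compose2) (simp add: borel_measurable_complex_iff)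
  then show ?thesis
    by (simp add: complex_surj)
qed

lemma indep_events_prob_Inter_lessThan:
  fixes A :: "nat \<Rightarrow> 'a set"
  assumes indep: "indep_events A {..<t}" and prob_A: "\<And>j. j < t \<Longrightarrow> prob (A j) = p" and "k \<le> t"
  shows Inter_lessThan_in_events: "space M \<inter> (\<Inter>j<k. A j) \<in> events"
    and prob_Inter_lessThan: "prob (space M \<inter> (\<Inter>j<k. A j)) = p ^ k"
proof -
  have events: "A j \<in> events" if "j < t" for j
    using indep that by (auto simp: indep_events_def)
  then show "space M \<inter> (\<Inter>j<k. A j) \<in> events"
    using \<open>k \<le> t\<close> by (cases "k = 0") (auto intro!: sets.Int sets.finite_INT)
  show "prob (space M \<inter> (\<Inter>j<k. A j)) = p ^ k"
  proof (cases "k = 0")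
    case False
    have "space M \<inter> (\<Inter>j<k. A j) = (\<Inter>j<k. A j)"
      using False events \<open>k \<le> t\<close> sets.sets_into_space by fastforce
    moreover have "prob (\<Inter>j<k. A j) = (\<Prod>j<k. prob (A j))"
      using indep False \<open>k \<le> t\<close> unfolding indep_events_def
      by (auto dest!: spec[of _ "{..<k}"])
    ultimately show ?thesis
      using \<open>k \<le> t\<close> by (simp add: prob_A)
  qed (simp add: measure_def emeasure_space_1)
qed

lemma expectation_sum_indicator:
  assumes "finite K" and "\<And>k. k \<in> K \<Longrightarrow> B k \<in> events"
  shows "expectation (\<lambda>\<omega>. \<Sum>k\<in>K. indicator (B k) \<omega>) = (\<Sum>k\<in>K. prob (B k))"
  using assms
  by (subst Bochner_Integration.integral_sum) (auto simp: sets.Int_space_eq2 emeasure_eq_measure intro!: sum.cong)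

lemma std_complex_gaussian_vec_prefix_below:
  assumes "std_complex_gaussian_vec M t h" and "\<alpha> > 0" and "k \<le> t"
  shows std_complex_gaussian_vec_prefix_below_in_events:
      "{\<omega>\<in>space M. \<forall>j<k. (cmod (h \<omega> j))\<^sup>2 < \<alpha>} \<in> events"
    and std_complex_gaussian_vec_prob_prefix_below:
      "prob {\<omega>\<in>space M. \<forall>j<k. (cmod (h \<omega> j))\<^sup>2 < \<alpha>} = (1 - exp (-\<alpha>)) ^ k"
proof -
  define A where "A j = {\<omega>\<in>space M. (cmod (h \<omega> j))\<^sup>2 < \<alpha>}" for j
  have prefix: "{\<omega>\<in>space M. \<forall>j<k. (cmod (h \<omega> j))\<^sup>2 < \<alpha>} = space M \<inter> (\<Inter>j<k. A j)"
    by (auto simp: A_def)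
  have indep: "indep_events A {..<t}"
    unfolding A_def using std_complex_gaussian_vec_indep_components[OF assms(1)]
    by (rule indep_eventsI_indep_vars) simp
  have prob_A: "prob (A j) = 1 - exp (-\<alpha>)" if "j < t" for j
    unfolding A_def using assms(1) that assms(2) by (rule std_complex_gaussian_vec_prob_cmod_sq_less)
  show "{\<omega>\<in>space M. \<forall>j<k. (cmod (h \<omega> j))\<^sup>2 < \<alpha>} \<in> events"
    unfolding prefix using indep prob_A assms(3) by (rule Inter_lessThan_in_events)
  show "prob {\<omega>\<in>space M. \<forall>j<k. (cmod (h \<omega> j))\<^sup>2 < \<alpha>} = (1 - exp (-\<alpha>)) ^ k"
    unfolding prefix using indep prob_A assms(3) by (rule prob_Inter_lessThan)
qed

end

lemma runB_selected_le: "fst (runB \<alpha> g i n) \<le> i + n"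
proof (induction n arbitrary: i)
  case (Suc n)
  from Suc[of "Suc i"] show ?case
    by (auto simp: case_prod_beta)
qed simp

lemma runB_selected_good_iff:
  "\<alpha> \<le> (cmod (g (fst (runB \<alpha> g i n))))\<^sup>2 \<longleftrightarrow> (\<exists>j<Suc n. \<alpha> \<le> (cmod (g (i + j)))\<^sup>2)"
proof (induction n arbitrary: i)
  case (Suc n)
  from Suc[of "Suc i"] show ?case
    by (subst Ex_less_Suc2) (auto simp: case_prod_beta)
qed simp

lemma runB_training_length:
  "length (fst (snd (runB \<alpha> g i n))) = (\<Sum>k<Suc n. of_bool (\<forall>j<k. (cmod (g (i + j)))\<^sup>2 < \<alpha>))"
proof (induction n arbitrary: i)
  case (Suc n)
  from Suc[of "Suc i"] show ?case
    by (subst sum.lessThan_Suc_shift)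
       (auto simp: case_prod_beta All_less_Suc2 simp del: sum.lessThan_Suc)
qed simp

lemma runB_feedback_length:
  "length (snd (snd (runB \<alpha> g i n))) = length (fst (snd (runB \<alpha> g i n)))"
  by (induction n arbitrary: i) (auto simp: case_prod_beta)

lemma cinner_basis_vec: "j < t \<Longrightarrow> cinner t (basis_vec j) g = g j"
  unfolding cinner_def basis_vec_def
  by (simp add: if_distrib[of cnj] if_distrib[of "\<lambda>c. c * _"] sum.delta cong: if_cong)

lemma is_arg_max_arg_max_finite:
  fixes f :: "'a \<Rightarrow> 'b::linorder"
  assumes "finite {x. P x}" and "P x"
  shows "is_arg_max f P (arg_max f P)"
proof -
  have "Max (f ` {x. P x}) \<in> f ` {x. P x}"
    using assms by (intro Max_in) auto
  then obtain m where "P m" and "f m = Max (f ` {x. P x})"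
    by auto
  then have "is_arg_max f P m"
    using assms(1) by (auto simp: is_arg_max_linorder)
  then show ?thesis
    unfolding arg_max_def by (rule someI)
qed

lemma schemeA_outage_iff:
  assumes "t \<ge> 1"
  shows "(cmod (cinner t (schemeA_bf t g) g))\<^sup>2 < \<alpha> \<longleftrightarrow> (\<forall>j<t. (cmod (g j))\<^sup>2 < \<alpha>)"
proof -
  let ?J = "ARG_MAX (\<lambda>i. cmod (g i)) i. i < t"
  have "?J < t" and "\<And>j. j < t \<Longrightarrow> cmod (g j) \<le> cmod (g ?J)"
    using is_arg_max_arg_max_finite[of "\<lambda>i. i < t" 0 "\<lambda>i. cmod (g i)"] assms
    by (auto simp: is_arg_max_linorder)
  then show ?thesis
    unfolding schemeA_bf_def cinner_basis_vec[OF \<open>?J < t\<close>]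
    by (meson le_less_trans norm_ge_zero power_mono)
qed

lemma schemeB_outage_iff:
  assumes "t \<ge> 1"
  shows "(cmod (cinner t (schemeB_bf t \<alpha> g) g))\<^sup>2 < \<alpha> \<longleftrightarrow> (\<forall>j<t. (cmod (g j))\<^sup>2 < \<alpha>)"
proof -
  have "fst (schemeB t \<alpha> g) < t"
    using runB_selected_le[of \<alpha> g 0 "t - 1"] assms by (simp add: schemeB_def)
  then show ?thesis
    using runB_selected_good_iff[of \<alpha> g 0 "t - 1"] assms
    by (auto simp: schemeB_bf_def schemeB_def cinner_basis_vec not_le)
qed

lemma schemeB_training_length:
  assumes "t \<ge> 1"
  shows "length (fst (snd (schemeB t \<alpha> g))) = (\<Sum>k<t. of_bool (\<forall>j<k. (cmod (g j))\<^sup>2 < \<alpha>))"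
  using assms by (simp add: schemeB_def runB_training_length)

lemma frB_eq_tlB: "frB M t \<alpha> h = tlB M t \<alpha> h"
  by (simp add: frB_def tlB_def schemeB_def runB_feedback_length)

lemma sum_power_one_minus_exp_neg:
  fixes \<alpha> :: real
  shows "(\<Sum>k<t. (1 - exp (-\<alpha>)) ^ k) = exp \<alpha> * (1 - (1 - exp (-\<alpha>)) ^ t)"
proof -
  have "(\<Sum>k<t. (1 - exp (-\<alpha>)) ^ k) = (1 - (1 - exp (-\<alpha>)) ^ t) / exp (-\<alpha>)"
    by (simp add: sum_gp_strict)
  also have "\<dots> = exp \<alpha> * (1 - (1 - exp (-\<alpha>)) ^ t)"
    by (simp add: exp_minus divide_inverse mult.commute)
  finally show ?thesis .
qed

theorem theorem1:
  fixes M :: "'a measure" and t :: nat and \<alpha> :: real and h :: "'a \<Rightarrow> nat \<Rightarrow> complex"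
  assumes "prob_space M" and "t \<ge> 1" and "\<alpha> > 0"
    and "std_complex_gaussian_vec M t h"
  shows "outage M t \<alpha> h (schemeB_bf t \<alpha>) = (1 - exp (-\<alpha>)) ^ t
    \<and> outage M t \<alpha> h (schemeA_bf t) = (1 - exp (-\<alpha>)) ^ t
    \<and> tlB M t \<alpha> h = exp \<alpha> * (1 - (1 - exp (-\<alpha>)) ^ t)
    \<and> frB M t \<alpha> h = exp \<alpha> * (1 - (1 - exp (-\<alpha>)) ^ t)
    \<and> exp \<alpha> * (1 - (1 - exp (-\<alpha>)) ^ t) < exp \<alpha>"
proof -
  interpret prob_space M by fact
  define B where "B k = {\<omega>\<in>space M. \<forall>j<k. (cmod (h \<omega> j))\<^sup>2 < \<alpha>}" for k
  have B_events: "B k \<in> events" if "k \<le> t" for k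
    unfolding B_def using assms(4,3) that by (rule std_complex_gaussian_vec_prefix_below_in_events)
  have prob_B: "prob (B k) = (1 - exp (-\<alpha>)) ^ k" if "k \<le> t" for k
    unfolding B_def using assms(4,3) that by (rule std_complex_gaussian_vec_prob_prefix_below)
  have outage_B: "outage M t \<alpha> h (schemeB_bf t \<alpha>) = (1 - exp (-\<alpha>)) ^ t"
    using prob_B[of t] by (simp add: outage_def schemeB_outage_iff[OF assms(2)] B_def)
  have outage_A: "outage M t \<alpha> h (schemeA_bf t) = (1 - exp (-\<alpha>)) ^ t"
    using prob_B[of t] by (simp add: outage_def schemeA_outage_iff[OF assms(2)] B_def)
  have "tlB M t \<alpha> h = expectation (\<lambda>\<omega>. \<Sum>k<t. indicator (B k) \<omega>)"
    unfolding tlB_def schemeB_training_length[OF assms(2)]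
    by (intro Bochner_Integration.integral_cong) (auto simp: B_def indicator_def)
  also have "\<dots> = (\<Sum>k<t. prob (B k))"
    using B_events by (intro expectation_sum_indicator) auto
  also have "\<dots> = exp \<alpha> * (1 - (1 - exp (-\<alpha>)) ^ t)"
    by (simp add: prob_B sum_power_one_minus_exp_neg)
  finally show ?thesis
    using outage_B outage_A assms(3) by (simp add: frB_eq_tlB)
qed

end
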